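(* Let $A$ be a finite-dimensional Leibniz algebra over a field. Then $A$ is nilpotent if and only if $A$ satisfies condition $k$, i.e. the only subalgebra $K$ of $A$ with $K+A^2=A$ is $K=A$.
   Context: A (left) Leibniz algebra is an algebra satisfying $x(yz)=(xy)z+y(xz)$ for all $x,y,z$. $A^2=AA$; lower central series $A^1=A$, $A^{j+1}=AA^j$; $A$ is nilpotent if $A^t=0$ for some $t$. *)

theory Defs
  imports Complex_Main
begin

text \<open>The algebra A is the whole carrier type 'v.\<close>

definition leibniz_algebra :: "('k::field \<Rightarrow> 'v::ab_group_add \<Rightarrow> 'v) \<Rightarrow> ('v \<Rightarrow> 'v \<Rightarrow> 'v) \<Rightarrow> bool" where
  "leibniz_algebra scale m \<longleftrightarrow>
     Vector_Spaces.vector_space scale \<and>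
     (\<forall>x. Vector_Spaces.linear scale scale (m x)) \<and>
     (\<forall>y. Vector_Spaces.linear scale scale (\<lambda>x. m x y)) \<and>
     (\<forall>x y z. m x (m y z) = m (m x y) z + m y (m x z))"

definition finite_dim :: "('k::field \<Rightarrow> 'v::ab_group_add \<Rightarrow> 'v) \<Rightarrow> bool" where
  "finite_dim scale \<longleftrightarrow> (\<exists>B. finite B \<and> module.span scale B = UNIV)"

definition prod_sp :: "('k::field \<Rightarrow> 'v::ab_group_add \<Rightarrow> 'v) \<Rightarrow> ('v \<Rightarrow> 'v \<Rightarrow> 'v) \<Rightarrow> 'v set \<Rightarrow> 'v set \<Rightarrow> 'v set" where
  "prod_sp scale m X Y = module.span scale {m x y | x y. x \<in> X \<and> y \<in> Y}"

text \<open>Lower central series, shifted: lcs j = A^(j+1); lcs 0 = A, lcs (Suc j) = A (lcs j).\<close>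
fun lcs :: "('k::field \<Rightarrow> 'v::ab_group_add \<Rightarrow> 'v) \<Rightarrow> ('v \<Rightarrow> 'v \<Rightarrow> 'v) \<Rightarrow> nat \<Rightarrow> 'v set" where
  "lcs scale m 0 = UNIV"
| "lcs scale m (Suc j) = prod_sp scale m UNIV (lcs scale m j)"

definition nilpotent_alg :: "('k::field \<Rightarrow> 'v::ab_group_add \<Rightarrow> 'v) \<Rightarrow> ('v \<Rightarrow> 'v \<Rightarrow> 'v) \<Rightarrow> bool" where
  "nilpotent_alg scale m \<longleftrightarrow> (\<exists>t. lcs scale m t = {0})"

definition subalgebra :: "('k::field \<Rightarrow> 'v::ab_group_add \<Rightarrow> 'v) \<Rightarrow> ('v \<Rightarrow> 'v \<Rightarrow> 'v) \<Rightarrow> 'v set \<Rightarrow> bool" where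
  "subalgebra scale m K \<longleftrightarrow> module.subspace scale K \<and> (\<forall>x\<in>K. \<forall>y\<in>K. m x y \<in> K)"

definition condition_k :: "('k::field \<Rightarrow> 'v::ab_group_add \<Rightarrow> 'v) \<Rightarrow> ('v \<Rightarrow> 'v \<Rightarrow> 'v) \<Rightarrow> bool" where
  "condition_k scale m \<longleftrightarrow>
     (\<forall>K. subalgebra scale m K \<and> {k + a | k a. k \<in> K \<and> a \<in> prod_sp scale m UNIV UNIV} = UNIV
          \<longrightarrow> K = UNIV)"

end

theory Submission
  imports Defs
begin

(* Nilpotent implies condition k: the lower central series is a filtration, A^i A^j \<subseteq> A^(i+j),
   so from K + A^2 = A one gets A^j \<subseteq> K + A^(j+1) for all j, hence K + A^j = A for all j;
   take j with A^j = 0.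

   Condition k implies nilpotent: for each x, the Fitting null component K of the left
   multiplication L_x is a subalgebra (L_x is a derivation), and the Fitting one component lies
   in the image of L_x, hence in A^2; so K + A^2 = A, K = A, i.e. every L_x is nilpotent.
   Engel's theorem for Leibniz algebras then gives nilpotency.  Its core is the invariant
   vector lemma: a subalgebra S acting nilpotently on a pair W \<subset> U of S-invariant subspaces
   kills some u \<in> U - W modulo W.  It is proved by induction on dim S, using that squares
   x x act trivially, so a maximal proper subalgebra containing the left annihilator part of S
   has codimension one. *)

declare lcs.simps(2)[simp del]

locale leibniz_alg = vector_space scale
  for scale :: "'k::field \<Rightarrow> 'v::ab_group_add \<Rightarrow> 'v" (infixr \<open>*s\<close> 75) +
  fixes m :: "'v \<Rightarrow> 'v \<Rightarrow> 'v"
  assumes linear_mult_left: "Vector_Spaces.linear (*s) (*s) (m x)"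
    and linear_mult_right: "Vector_Spaces.linear (*s) (*s) (\<lambda>x. m x y)"
    and leibniz: "m x (m y z) = m (m x y) z + m y (m x z)"

lemma leibniz_algebra_imp_locale:
  "leibniz_algebra scale m \<Longrightarrow> leibniz_alg scale m"
  unfolding leibniz_algebra_def leibniz_alg_def leibniz_alg_axioms_def by blast

context leibniz_alg
begin

lemma addL: "m (a + b) c = m a c + m b c"
  using linear_mult_right[of c] unfolding Vector_Spaces.linear_iff by blast

lemma addR: "m a (b + c) = m a b + m a c"
  using linear_mult_left[of a] unfolding Vector_Spaces.linear_iff by blast

lemma scaleL: "m (k *s a) b = k *s m a b"
  using linear_mult_right[of b] unfolding Vector_Spaces.linear_iff by blast

lemma scaleR: "m a (k *s b) = k *s m a b"
  using linear_mult_left[of a] unfolding Vector_Spaces.linear_iff by blast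

lemma zeroL [simp]: "m 0 b = 0"
  using addL[of 0 0 b] by simp

lemma zeroR [simp]: "m a 0 = 0"
  using addR[of a 0 0] by simp

lemma mult_span_left:
  assumes W: "subspace W" and X: "\<And>x. x \<in> X \<Longrightarrow> m x y \<in> W" and x: "x \<in> span X"
  shows "m x y \<in> W"
proof -
  have "subspace {x. m x y \<in> W}"
    using W by (auto simp: subspace_def addL scaleL)
  then show ?thesis using span_induct[OF x, of "\<lambda>x. m x y \<in> W"] X by auto
qed

subsection \<open>The lower central series\<close>

abbreviation LC :: "nat \<Rightarrow> 'v set" where "LC \<equiv> lcs scale m"

lemma lcs_Suc: "LC (Suc j) = span {m x y | x y. y \<in> LC j}"
  by (simp add: prod_sp_def lcs.simps(2))

lemma subspace_lcs: "subspace (LC j)"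
  by (cases j) (simp_all add: lcs_Suc)

lemma lcs_mem: "y \<in> LC j \<Longrightarrow> m x y \<in> LC (Suc j)"
  unfolding lcs_Suc by (rule span_base) blast

lemma lcs_antimono: "LC (Suc j) \<subseteq> LC j"
proof (induction j)
  case (Suc j)
  have "{m x y | x y. y \<in> LC (Suc j)} \<subseteq> {m x y | x y. y \<in> LC j}" using Suc by blast
  then show ?case unfolding lcs_Suc[of "Suc j"] lcs_Suc[of j] by (rule span_mono)
qed simp

lemma lcs_invariant: "y \<in> LC j \<Longrightarrow> m x y \<in> LC j"
  using lcs_mem lcs_antimono by blast

text \<open>The filtration property A^i A^k \<subseteq> A^(i+k), in the shifted indexing LC i = A^(i+1).
  By the Leibniz identity (u v) b = u (v b) - v (u b), which lowers the left factor's degree.\<close>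
lemma lcs_prod: "a \<in> LC i \<Longrightarrow> b \<in> LC k \<Longrightarrow> m a b \<in> LC (i + k + 1)"
proof (induction i arbitrary: k a b)
  case 0
  then show ?case using lcs_mem by simp
next
  case (Suc i)
  have "a \<in> span {m x y | x y. y \<in> LC i}" using Suc.prems(1) lcs_Suc by blast
  then show ?case
  proof (rule mult_span_left[OF subspace_lcs, rotated])
    fix g assume "g \<in> {m x y | x y. y \<in> LC i}"
    then obtain u v where g: "g = m u v" "v \<in> LC i" by blast
    have "m g b = m u (m v b) - m v (m u b)" using leibniz[of u v b] g by (simp add: algebra_simps)
    moreover have "m u (m v b) \<in> LC (Suc i + k + 1)"
      using Suc.IH[OF g(2) Suc.prems(2)] lcs_mem by simp
    moreover have "m v (m u b) \<in> LC (Suc i + k + 1)"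
      using Suc.IH[OF g(2) lcs_mem[OF Suc.prems(2)]] by simp
    ultimately show "m g b \<in> LC (Suc i + k + 1)" using subspace_lcs by (simp add: subspace_diff)
  qed
qed

subsection \<open>Nilpotent algebras satisfy condition k\<close>

text \<open>If K is a subalgebra with K + A^2 = A, then A^(j+1) \<subseteq> K + A^(j+2): write the factors of a
  generator x y of A^(j+1) as elements of K plus higher terms and expand.\<close>
lemma lcs_sub_sum_next:
  assumes K: "subalgebra scale m K"
    and KA: "{k + a | k a. k \<in> K \<and> a \<in> LC 1} = UNIV"
  shows "LC j \<subseteq> {k + a | k a. k \<in> K \<and> a \<in> LC (Suc j)}"
proof (induction j)
  case 0
  then show ?case using KA by simp
next
  case (Suc j)
  have Ks: "subspace K" and Kcl: "\<forall>x\<in>K. \<forall>y\<in>K. m x y \<in> K"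
    using K by (auto simp: subalgebra_def)
  have "{m x y | x y. y \<in> LC j} \<subseteq> {k + a | k a. k \<in> K \<and> a \<in> LC (Suc (Suc j))}"
  proof safe
    fix x y assume y: "y \<in> LC j"
    obtain k' a where ka: "k' \<in> K" "a \<in> LC 1" "x = k' + a" using KA by blast
    obtain k y' where ky: "k \<in> K" "y' \<in> LC (Suc j)" "y = k + y'" using Suc y by blast
    have "y' \<in> LC j" using ky(2) lcs_antimono by blast
    then have kj: "k \<in> LC j" using ky(3) y subspace_lcs[of j] subspace_diff by fastforce
    have "m x y = m k' k + (m k' y' + m a k + m a y')"
      using ka ky by (simp add: addL addR algebra_simps)
    moreover have "m k' k \<in> K" using Kcl ka ky by blast
    moreover have "m k' y' + m a k + m a y' \<in> LC (Suc (Suc j))"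
      using lcs_mem[OF ky(2)] lcs_prod[OF ka(2) kj] lcs_prod[OF ka(2) ky(2)] lcs_antimono
        subspace_lcs subspace_add by (auto simp: subset_iff)
    ultimately show "\<exists>k a. m x y = k + a \<and> k \<in> K \<and> a \<in> LC (Suc (Suc j))" by blast
  qed
  moreover have "subspace {k + a | k a. k \<in> K \<and> a \<in> LC (Suc (Suc j))}"
    using subspace_sums Ks subspace_lcs by blast
  ultimately show ?case unfolding lcs_Suc[of j] using span_minimal by blast
qed

text \<open>First direction of the main theorem (no finiteness needed).\<close>
theorem nilpotent_imp_condition_k:
  assumes "nilpotent_alg scale m"
  shows "condition_k scale m"
  unfolding condition_k_def
proof (intro allI impI, elim conjE)
  fix K assume K: "subalgebra scale m K"
    and KA: "{k + a | k a. k \<in> K \<and> a \<in> prod_sp scale m UNIV UNIV} = UNIV"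
  have KA1: "{k + a | k a. k \<in> K \<and> a \<in> LC 1} = UNIV"
    using KA by (simp add: lcs.simps(2))
  have Ks: "subspace K" using K by (simp add: subalgebra_def)
  have sum_UNIV: "{k + a | k a. k \<in> K \<and> a \<in> LC j} = UNIV" for j
  proof (induction j)
    case 0
    show ?case using Ks subspace_0 by force
  next
    case (Suc j)
    show ?case
    proof safe
      fix v
      obtain k a where "k \<in> K" "a \<in> LC j" "v = k + a" using Suc by blast
      moreover obtain k2 a2 where "k2 \<in> K" "a2 \<in> LC (Suc j)" "a = k2 + a2"
        using lcs_sub_sum_next[OF K KA1] \<open>a \<in> LC j\<close> by blast
      ultimately have "v = (k + k2) + a2" "k + k2 \<in> K" "a2 \<in> LC (Suc j)"
        using Ks subspace_add by (auto simp: add.assoc)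
      then show "\<exists>k a. v = k + a \<and> k \<in> K \<and> a \<in> LC (Suc j)" by blast
    qed simp
  qed
  obtain t where "LC t = {0}" using assms unfolding nilpotent_alg_def by blast
  then show "K = UNIV" using sum_UNIV[of t] by auto
qed

subsection \<open>Invariant vectors\<close>

definition left_annihilator :: "'v set" where
  "left_annihilator = {z. \<forall>v. m z v = 0}"

lemma subspace_left_annihilator: "subspace left_annihilator"
  by (auto simp: subspace_def left_annihilator_def addL scaleL)

lemma square_left_annihilator: "m x x \<in> left_annihilator"
  using leibniz[of x x] by (simp add: left_annihilator_def)

definition invariant :: "'v set \<Rightarrow> 'v set \<Rightarrow> bool" where
  "invariant S U \<longleftrightarrow> (\<forall>s\<in>S. \<forall>u\<in>U. m s u \<in> U)"

definition has_invariant_vectors :: "'v set \<Rightarrow> bool" where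
  "has_invariant_vectors S \<longleftrightarrow>
     (\<forall>U W. subspace U \<longrightarrow> subspace W \<longrightarrow> W \<subset> U \<longrightarrow> invariant S U \<longrightarrow> invariant S W
        \<longrightarrow> (\<exists>u\<in>U. u \<notin> W \<and> (\<forall>s\<in>S. m s u \<in> W)))"

lemma annihilator_has_invariant_vectors:
  assumes "S \<subseteq> left_annihilator"
  shows "has_invariant_vectors S"
  unfolding has_invariant_vectors_def
proof (intro allI impI)
  fix U W :: "'v set" assume "subspace W" "W \<subset> U"
  then obtain u where "u \<in> U" "u \<notin> W" "0 \<in> W" by (auto simp: subspace_0)
  moreover have "\<forall>s\<in>S. m s u = 0" using assms by (auto simp: left_annihilator_def)
  ultimately show "\<exists>u\<in>U. u \<notin> W \<and> (\<forall>s\<in>S. m s u \<in> W)" by auto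
qed

lemma span_insert_decomp:
  "subspace M \<Longrightarrow> x \<in> span (insert y M) \<Longrightarrow> \<exists>k a. a \<in> M \<and> x = a + k *s y"
  using span_breakdown_eq[of x y M] by (metis diff_add_cancel span_eq_iff)

text \<open>If iterating L_y on u \<notin> W eventually lands in W, then along the orbit there is a
  last vector outside W; its image lies in W.\<close>
lemma nilpotent_orbit_escape:
  assumes X: "\<And>u. u \<in> X \<Longrightarrow> m y u \<in> X"
  shows "u \<in> X \<Longrightarrow> u \<notin> W \<Longrightarrow> (m y ^^ k) u \<in> W \<Longrightarrow> \<exists>u'\<in>X. u' \<notin> W \<and> m y u' \<in> W"
proof (induction k arbitrary: u)
  case (Suc k)
  show ?case
  proof (cases "m y u \<in> W")
    case False
    have "(m y ^^ k) (m y u) \<in> W"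
      using Suc.prems(3) by (simp add: funpow_Suc_right del: funpow.simps)
    then show ?thesis using Suc.IH[of "m y u"] False X Suc.prems(1) by blast
  qed (use Suc in blast)
qed simp

text \<open>The vectors u \<in> U with M u \<subseteq> W form
  an L_y-stable set by the Leibniz identity, and L_y pushes one of them into W.\<close>
lemma has_invariant_vectors_extend:
  assumes M: "subspace M" "has_invariant_vectors M"
    and y: "\<forall>b\<in>M. m b y \<in> M" and nil: "\<And>u. \<exists>k. (m y ^^ k) u = 0"
  shows "has_invariant_vectors (span (insert y M))"
  unfolding has_invariant_vectors_def
proof (intro allI impI)
  fix U W
  assume U: "subspace U" and W: "subspace W" "W \<subset> U"
    and invU: "invariant (span (insert y M)) U" and invW: "invariant (span (insert y M)) W"
  have M_T: "M \<subseteq> span (insert y M)" and y_T: "y \<in> span (insert y M)"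
    by (auto intro: span_base)
  have MU: "invariant M U" "invariant M W"
    using invU invW M_T unfolding invariant_def by blast+
  have yU: "\<forall>u\<in>U. m y u \<in> U" and yW: "\<forall>w\<in>W. m y w \<in> W"
    using invU invW y_T unfolding invariant_def by blast+
  define X where "X = {u \<in> U. \<forall>b\<in>M. m b u \<in> W}"
  obtain u0 where u0: "u0 \<in> X" "u0 \<notin> W"
    using M(2) U W MU unfolding has_invariant_vectors_def X_def by blast
  have X_stable: "m y u \<in> X" if "u \<in> X" for u
  proof -
    have "m b (m y u) \<in> W" if "b \<in> M" for b
    proof -
      have "m (m b y) u \<in> W" "m y (m b u) \<in> W" using y yW \<open>u \<in> X\<close> that by (auto simp: X_def)
      then show ?thesis using leibniz[of b y u] W(1) by (simp add: subspace_add)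
    qed
    then show ?thesis using yU that by (simp add: X_def)
  qed
  obtain k where "(m y ^^ k) u0 = 0" using nil by blast
  then have "(m y ^^ k) u0 \<in> W" using W(1) subspace_0 by simp
  then obtain u where u: "u \<in> X" "u \<notin> W" "m y u \<in> W"
    using nilpotent_orbit_escape[OF X_stable u0] by blast
  have "m s u \<in> W" if s: "s \<in> span (insert y M)" for s
  proof -
    obtain k a where "a \<in> M" "s = a + k *s y" using span_insert_decomp[OF M(1) s] by blast
    moreover have "m a u \<in> W" using u(1) \<open>a \<in> M\<close> by (simp add: X_def)
    ultimately show ?thesis using u(3) W(1) by (simp add: addL scaleL subspace_add subspace_scale)
  qed
  then show "\<exists>u\<in>U. u \<notin> W \<and> (\<forall>s\<in>span (insert y M). m s u \<in> W)" using u X_def by auto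
qed

lemma polarization: "m y b = m (y + b) (y + b) - m y y - m b b - m b y"
  by (simp add: addL addR algebra_simps)

lemma subalgebra_span_insert:
  assumes M: "subalgebra scale m M" and y: "\<forall>b\<in>M. m b y \<in> M \<and> m y b \<in> M" "m y y \<in> M"
  shows "subalgebra scale m (span (insert y M))"
proof -
  have Ms: "subspace M" using M by (simp add: subalgebra_def)
  have "m a b \<in> M" if ab: "a \<in> span (insert y M)" "b \<in> span (insert y M)" for a b
  proof -
    obtain k a' l b' where decomp: "a' \<in> M" "a = a' + k *s y" "b' \<in> M" "b = b' + l *s y"
      using span_insert_decomp[OF Ms ab(1)] span_insert_decomp[OF Ms ab(2)] by metis
    then have "m a b = m a' b' + l *s m a' y + k *s m y b' + (k * l) *s m y y"
      by (simp add: addL addR scaleL scaleR algebra_simps)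
    moreover have "m a' b' \<in> M" using M decomp by (simp add: subalgebra_def)
    ultimately show ?thesis using Ms y decomp by (simp add: subspace_add subspace_scale)
  qed
  then show ?thesis unfolding subalgebra_def by (auto intro: span_base)
qed

subsection \<open>The Fitting null component of a left multiplication\<close>

lemma left_mult_pow_zero [simp]: "(m x ^^ n) 0 = 0"
  by (induction n) simp_all

lemma left_mult_pow_add: "(m x ^^ n) (a + b) = (m x ^^ n) a + (m x ^^ n) b"
  by (induction n) (simp_all add: addR)

lemma left_mult_pow_scale: "(m x ^^ n) (c *s a) = c *s (m x ^^ n) a"
  by (induction n) (simp_all add: scaleR)

lemma left_mult_pow_diff: "(m x ^^ n) (a - b) = (m x ^^ n) a - (m x ^^ n) b"
  using left_mult_pow_add[where a = "a - b" and b = b] by (simp add: eq_diff_eq)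

definition nil_space :: "'v \<Rightarrow> 'v set" where
  "nil_space x = {v. \<exists>k. (m x ^^ k) v = 0}"

lemma left_mult_pow_vanishes_later: "(m x ^^ k) v = 0 \<Longrightarrow> (m x ^^ (j + k)) v = 0"
  by (simp add: funpow_add)

text \<open>L_x is a derivation of the product (the Leibniz identity), hence by the Leibniz rule
  for iterated derivations L_x^(p+q) kills a b when L_x^p kills a and L_x^q kills b.\<close>
lemma left_mult_pow_prod:
  "(m x ^^ p) a = 0 \<Longrightarrow> (m x ^^ q) b = 0 \<Longrightarrow> (m x ^^ (p + q)) (m a b) = 0"
proof (induction "p + q" arbitrary: p q a b rule: less_induct)
  case less
  show ?case
  proof (cases "p = 0 \<or> q = 0")
    case True
    then show ?thesis using less.prems by auto
  next
    case False
    then obtain p' q' where pq: "p = Suc p'" "q = Suc q'" by (meson not0_implies_Suc)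
    have a: "(m x ^^ p') (m x a) = 0" and b: "(m x ^^ q') (m x b) = 0"
      using less.prems pq by (simp_all add: funpow_Suc_right del: funpow.simps)
    have "(m x ^^ (p' + q)) (m (m x a) b) = 0" using less.hyps[OF _ a less.prems(2)] pq by simp
    moreover have "(m x ^^ (p + q')) (m a (m x b)) = 0"
      using less.hyps[OF _ less.prems(1) b] pq by simp
    ultimately have "(m x ^^ (p' + q)) (m x (m a b)) = 0"
      using pq leibniz[of x a b] by (simp add: left_mult_pow_add addR)
    then show ?thesis using pq by (simp add: funpow_Suc_right del: funpow.simps)
  qed
qed

lemma nil_space_subalgebra: "subalgebra scale m (nil_space x)"
  unfolding subalgebra_def
proof (intro conjI subspaceI ballI)
  show "0 \<in> nil_space x" by (auto simp: nil_space_def intro: exI[of _ 0])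
next
  fix a b assume "a \<in> nil_space x" "b \<in> nil_space x"
  then obtain ka kb where ka: "(m x ^^ ka) a = 0" and kb: "(m x ^^ kb) b = 0"
    by (auto simp: nil_space_def)
  have "(m x ^^ (kb + ka)) a = 0" "(m x ^^ (ka + kb)) b = 0"
    using left_mult_pow_vanishes_later ka kb by blast+
  then have "(m x ^^ (ka + kb)) (a + b) = 0"
    by (simp add: left_mult_pow_add add.commute)
  moreover have "(m x ^^ (ka + kb)) (m a b) = 0" using left_mult_pow_prod[OF ka kb] .
  ultimately show "a + b \<in> nil_space x" "m a b \<in> nil_space x"
    by (auto simp: nil_space_def)
next
  fix c a assume "a \<in> nil_space x"
  then show "c *s a \<in> nil_space x" by (auto simp: nil_space_def left_mult_pow_scale)
qed

end

locale fd_leibniz_alg = leibniz_alg scale m + finite_dimensional_vector_space scale Basis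
  for scale :: "'k::field \<Rightarrow> 'v::ab_group_add \<Rightarrow> 'v" (infixr \<open>*s\<close> 75)
    and m and Basis :: "'v set"

lemma fd_leibniz_alg_exists:
  assumes "leibniz_alg scale m" "finite_dim scale"
  shows "\<exists>Basis. fd_leibniz_alg scale m Basis"
proof -
  interpret leibniz_alg scale m by fact
  obtain B where B: "finite B" "span B = UNIV" using assms(2) unfolding finite_dim_def by blast
  obtain B' where B': "B' \<subseteq> B" "independent B'" "B \<subseteq> span B'"
    using maximal_independent_subset[of B] by blast
  have "span B \<subseteq> span B'" using span_mono[OF B'(3)] by (simp add: span_span)
  then have "span B' = UNIV" using B(2) by auto
  then have "finite_dimensional_vector_space scale B'"
    using B(1) B' finite_subset
    by (intro finite_dimensional_vector_space.intro finite_dimensional_vector_space_axioms.intro)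
      (auto intro: vector_space_axioms)
  then show ?thesis using assms(1) by (auto intro: fd_leibniz_alg.intro)
qed

context finite_dimensional_vector_space
begin

lemma dim_strict_mono: "subspace S \<Longrightarrow> subspace T \<Longrightarrow> S \<subset> T \<Longrightarrow> dim S < dim T"
  using dim_subset[of S T] subspace_dim_equal[of S T] by fastforce

lemma ex_dim_maximal:
  assumes "P M0"
  shows "\<exists>M. P M \<and> (\<forall>M'. P M' \<longrightarrow> dim M' \<le> dim M)"
  using ex_has_greatest_nat[of P M0 dim "Suc dimension"] assms dim_subset_UNIV
  by (metis le_imp_less_Suc)

text \<open>Fitting's lemma, in the form needed here: for a linear map f the images of the powers
  f^n stabilise at some N > 0, so every f^N v is already of the form f^N (f^N w).\<close>
lemma fitting_stabilization:
  assumes f: "Vector_Spaces.linear (*s) (*s) f"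
  obtains N where "N > 0" "\<And>v. \<exists>w. (f ^^ N) v = (f ^^ N) ((f ^^ N) w)"
proof -
  define I where "I n = range (f ^^ n)" for n
  have lin_pow: "Vector_Spaces.linear (*s) (*s) (f ^^ n)" for n
    using f by (induction n) (auto simp: linear_id intro: Vector_Spaces.linear_compose)
  have I_subspace: "subspace (I n)" for n
    unfolding I_def by (metis lin_pow module_hom.subspace_image linear_iff_module_hom subspace_UNIV)
  have I_Suc: "I (Suc n) = f ` I n" for n
    unfolding I_def by (simp add: image_comp)
  have I_antimono: "I (Suc n) \<subseteq> I n" for n
    unfolding I_def by (auto simp: funpow_Suc_right simp del: funpow.simps)
  obtain N where N: "N \<ge> 1" "\<And>n. n \<ge> 1 \<Longrightarrow> dim (I N) \<le> dim (I n)"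
    using ex_has_least_nat[of "\<lambda>n. n \<ge> (1::nat)" 1 "\<lambda>n. dim (I n)"] by auto
  have "I (Suc N) = I N"
    using N subspace_dim_equal[OF I_subspace I_subspace I_antimono] by simp
  then have I_stable: "I (N + k) = I N" for k
    by (induction k) (simp_all add: I_Suc)
  have stable: "\<exists>w. (f ^^ N) v = (f ^^ N) ((f ^^ N) w)" for v
  proof -
    have "(f ^^ N) v \<in> I (N + N)" using I_stable[of N] by (simp add: I_def)
    then show ?thesis unfolding I_def by (auto simp: funpow_add)
  qed
  show ?thesis using N(1) by (intro that[OF _ stable]) simp
qed

end

context fd_leibniz_alg
begin

subsection \<open>Engel's theorem\<close>

text \<open>If S acts non-trivially, pick a
  maximal proper subalgebra M of S containing the part of the left annihilator in S.  By the
  inductive hypothesis (applied to M acting on S over M) some y \<in> S - M satisfies M y \<subseteq> M;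
  since squares lie in M, polarisation gives y M \<subseteq> M as well, so M + k y is a subalgebra and
  by maximality it is all of S.\<close>
lemma codim_one_subalgebra:
  assumes S: "subalgebra scale m S" and nontrivial: "\<not> S \<subseteq> left_annihilator"
    and IH: "\<And>M. subalgebra scale m M \<Longrightarrow> dim M < dim S \<Longrightarrow> has_invariant_vectors M"
  obtains M y where "subspace M" "has_invariant_vectors M" "\<forall>b\<in>M. m b y \<in> M"
    "S = span (insert y M)"
proof -
  have Ss: "subspace S" and Scl: "\<forall>a\<in>S. \<forall>b\<in>S. m a b \<in> S"
    using S by (auto simp: subalgebra_def)
  define P where "P M \<longleftrightarrow> subalgebra scale m M \<and> M \<subset> S \<and> S \<inter> left_annihilator \<subseteq> M" for M
  have "P (S \<inter> left_annihilator)"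
    using nontrivial Ss subspace_0[OF Ss] subspace_left_annihilator subspace_inter Scl
    by (auto simp: P_def subalgebra_def left_annihilator_def)
  from ex_dim_maximal[of P, OF this]
  obtain M where PM: "P M" and M_max: "\<And>M'. P M' \<Longrightarrow> dim M' \<le> dim M" by blast
  have M: "subalgebra scale m M" "M \<subset> S" "S \<inter> left_annihilator \<subseteq> M" using PM by (auto simp: P_def)
  have Ms: "subspace M" using M(1) by (simp add: subalgebra_def)
  have "dim M < dim S" using dim_strict_mono[OF Ms Ss M(2)] .
  then have hiv_M: "has_invariant_vectors M" using IH M(1) by blast
  have inv: "invariant M S" "invariant M M"
    using Scl M(1,2) by (auto simp: invariant_def subalgebra_def)
  obtain y where y: "y \<in> S" "y \<notin> M" "\<forall>b\<in>M. m b y \<in> M"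
    using hiv_M[unfolded has_invariant_vectors_def, rule_format, OF Ss Ms M(2) inv] by blast
  have sq: "m a a \<in> M" if "a \<in> S" for a
    using that Scl M(3) square_left_annihilator by blast
  have "m y b \<in> M" if "b \<in> M" for b
  proof -
    have "b \<in> S" "y + b \<in> S" using y(1) that M(2) Ss subspace_add by auto
    then show ?thesis
      using polarization[of y b] sq[of "y + b"] sq[OF y(1)] sq[of b] y(3) that Ms
      by (simp add: subspace_diff)
  qed
  then have T: "subalgebra scale m (span (insert y M))"
    using subalgebra_span_insert M(1) y(3) sq[OF y(1)] by blast
  have T_S: "span (insert y M) \<subseteq> S" using y(1) M(2) Ss span_minimal[of "insert y M" S] by auto
  have M_T: "M \<subset> span (insert y M)" using y(2) by (auto intro: span_base)
  then have "dim M < dim (span (insert y M))" using dim_strict_mono Ms subspace_span by blast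
  then have "\<not> P (span (insert y M))" using M_max[of "span (insert y M)"] by (meson not_le)
  then have "S = span (insert y M)" using T T_S M(3) M_T by (auto simp: P_def)
  then show ?thesis using that Ms hiv_M y(3) by blast
qed

theorem engel_invariant_vectors:
  assumes nil: "\<And>x v. \<exists>k. (m x ^^ k) v = 0" and "subalgebra scale m S"
  shows "has_invariant_vectors S"
  using assms(2)
proof (induction "dim S" arbitrary: S rule: less_induct)
  case less
  show ?case
  proof (cases "S \<subseteq> left_annihilator")
    case True
    then show ?thesis by (rule annihilator_has_invariant_vectors)
  next
    case False
    obtain M y where "subspace M" "has_invariant_vectors M" "\<forall>b\<in>M. m b y \<in> M"
      "S = span (insert y M)"
      using codim_one_subalgebra[OF less.prems False] less.hyps by blast
    then show ?thesis using has_invariant_vectors_extend nil by metis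
  qed
qed

text \<open>If A has invariant vectors, every non-zero ideal U contains a proper subspace W with
  A U \<subseteq> W: take W maximal among proper A-invariant subspaces; an invariant vector u then
  makes W + k u invariant, so W + k u = U and A U \<subseteq> W.\<close>
lemma proper_subspace_absorbing_products:
  assumes hiv: "has_invariant_vectors UNIV"
    and U: "subspace U" "invariant UNIV U" "U \<noteq> {0}"
  obtains W where "subspace W" "W \<subset> U" "\<forall>x. \<forall>u\<in>U. m x u \<in> W"
proof -
  define Q where "Q W \<longleftrightarrow> subspace W \<and> W \<subset> U \<and> invariant UNIV W" for W
  have "Q {0}" using U subspace_0 by (auto simp: Q_def invariant_def)
  from ex_dim_maximal[of Q, OF this]
  obtain W where QW: "Q W" and W_max: "\<And>W'. Q W' \<Longrightarrow> dim W' \<le> dim W" by blast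
  have W: "subspace W" "W \<subset> U" "invariant UNIV W" using QW by (auto simp: Q_def)
  obtain u where u: "u \<in> U" "u \<notin> W" "\<forall>x. m x u \<in> W"
    using hiv[unfolded has_invariant_vectors_def, rule_format, OF U(1) W(1,2) U(2) W(3)] by blast
  define T where "T = span (insert u W)"
  have T_to_W: "m x t \<in> W" if t: "t \<in> T" for x t
  proof -
    obtain k a where "a \<in> W" "t = a + k *s u" using span_insert_decomp W(1) t T_def by blast
    then show ?thesis using u(3) W(1,3) by (simp add: invariant_def addR scaleR subspace_add subspace_scale)
  qed
  have T_U: "T \<subseteq> U" using u(1) W(2) U(1) span_minimal[of "insert u W" U] by (auto simp: T_def)
  have W_T: "W \<subset> T" using u(2) by (auto simp: T_def intro: span_base)
  then have "dim W < dim T" using dim_strict_mono[OF W(1) _ W_T] subspace_span T_def by blast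
  moreover have "invariant UNIV T" using T_to_W W_T by (auto simp: invariant_def)
  ultimately have "T = U" using W_max[of T] T_U by (auto simp: Q_def T_def)
  then show ?thesis using that W(1,2) T_to_W by blast
qed

lemma lcs_dim_decreasing:
  assumes hiv: "has_invariant_vectors UNIV" and nonzero: "LC j \<noteq> {0}"
  shows "dim (LC (Suc j)) < dim (LC j)"
proof -
  have inv: "invariant UNIV (LC j)" using lcs_invariant by (simp add: invariant_def)
  obtain W where W: "subspace W" "W \<subset> LC j" "\<forall>x. \<forall>u\<in>LC j. m x u \<in> W"
    using proper_subspace_absorbing_products[OF hiv subspace_lcs inv nonzero] by blast
  have "{m x y | x y. y \<in> LC j} \<subseteq> W" using W(3) by blast
  then have "LC (Suc j) \<subseteq> W" unfolding lcs_Suc using W(1) by (rule span_minimal)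
  then show ?thesis using dim_strict_mono[OF subspace_lcs subspace_lcs] W(2) lcs_antimono by blast
qed

theorem engel_nilpotent:
  assumes nil: "\<And>x v. \<exists>k. (m x ^^ k) v = 0"
  shows "nilpotent_alg scale m"
proof -
  have hiv: "has_invariant_vectors UNIV"
    using engel_invariant_vectors[OF nil] by (simp add: subalgebra_def)
  have "LC j = {0} \<or> dim (LC j) + j \<le> dimension" for j
  proof (induction j)
    case 0
    then show ?case using dim_subset_UNIV by (simp add: dimension_def)
  next
    case (Suc j)
    show ?case
    proof (cases "LC j = {0}")
      case True
      then have "LC (Suc j) = {0}" using lcs_antimono[of j] subspace_lcs[of "Suc j"] subspace_0 by blast
      then show ?thesis by simp
    next
      case False
      then show ?thesis using Suc lcs_dim_decreasing[OF hiv False] by auto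
    qed
  qed
  from this[of "Suc dimension"] show ?thesis unfolding nilpotent_alg_def by auto
qed

text \<open>Condition k forces every left multiplication to be nilpotent: by Fitting's lemma,
  v = (v - L_x^N w) + L_x^N w with the first summand in the nil space of L_x and the second
  in A^2, so the subalgebra nil_space x supplements A^2 and must be all of A.\<close>
theorem condition_k_imp_left_mult_nilpotent:
  assumes "condition_k scale m"
  shows "\<exists>k. (m x ^^ k) v = 0"
proof -
  obtain N where N: "N > 0" "\<And>v. \<exists>w. (m x ^^ N) v = (m x ^^ N) ((m x ^^ N) w)"
    using fitting_stabilization[OF linear_mult_left] by blast
  have "u \<in> {k + a | k a. k \<in> nil_space x \<and> a \<in> prod_sp scale m UNIV UNIV}" for u
  proof -
    obtain w where w: "(m x ^^ N) u = (m x ^^ N) ((m x ^^ N) w)" using N(2) by blast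
    have "u - (m x ^^ N) w \<in> nil_space x"
      using w by (auto simp: nil_space_def left_mult_pow_diff intro: exI[of _ N])
    moreover have "(m x ^^ N) w \<in> prod_sp scale m UNIV UNIV"
    proof -
      obtain N' where "N = Suc N'" using N(1) gr0_implies_Suc by blast
      then have "(m x ^^ N) w = m x ((m x ^^ N') w)" by simp
      then show ?thesis unfolding prod_sp_def by (auto intro: span_base)
    qed
    moreover have "u = (u - (m x ^^ N) w) + (m x ^^ N) w" by simp
    ultimately show ?thesis by blast
  qed
  then have "nil_space x = UNIV"
    using assms nil_space_subalgebra unfolding condition_k_def by blast
  then show ?thesis by (auto simp: nil_space_def)
qed

end

theorem mainTheorem3:
  fixes scale :: "'k::field \<Rightarrow> 'v::ab_group_add \<Rightarrow> 'v"
    and m :: "'v \<Rightarrow> 'v \<Rightarrow> 'v"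
  assumes "leibniz_algebra scale m"
    and "finite_dim scale"
  shows "nilpotent_alg scale m \<longleftrightarrow> condition_k scale m"
proof -
  have "leibniz_alg scale m" using assms(1) by (rule leibniz_algebra_imp_locale)
  then obtain Basis where "fd_leibniz_alg scale m Basis"
    using assms(2) fd_leibniz_alg_exists by blast
  then interpret fd_leibniz_alg scale m Basis .
  show ?thesis
    using nilpotent_imp_condition_k condition_k_imp_left_mult_nilpotent engel_nilpotent by blast
qed

end
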